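(* Let $P,Q$ be $n\times n$ matrices with all entries in $(0,1)$, stochastic by columns (i.e. $\sum_{i=1}^nP(i,j)=\sum_{i=1}^nQ(i,j)=1$ for each $j$), and suppose that for some $\epsilon>0$, $e^{-\epsilon}\le P(i,j)/Q(i,j)\le e^{\epsilon}$ for all $i,j$. Then the maximal eigenvalue of both $P$ and $Q$ is $1$, and their associated positive right eigenvectors $u,v$ satisfy \[ d_p(u,v)\le\frac{2\epsilon}{1-\min(\tau_P,\tau_Q)}, \] where $\tau_P,\tau_Q$ are the Birkhoff contraction coefficients of $P$ and $Q$.
   Context: For $\pmb{x},\pmb{y}\in(0,\infty)^n$, the projective pseudo-distance is $d_p(\pmb{x},\pmb{y})=\max_i\log(x_i/y_i)-\min_i\log(x_i/y_i)$. For a primitive matrix $M$ (nonnegative with some power strictly positive) with primitivity index $\ell$ (the least $\ell$ with $M^\ell>0$), the Birkhoff contraction coefficient is $\tau_M=\dfrac{1-\sqrt{\theta}}{1+\sqrt{\theta}}$ with $\theta=\min_{i,j,k,l}\dfrac{M^\ell(i,j)M^\ell(k,l)}{M^\ell(i,l)M^\ell(k,j)}$. For a positive matrix, $\ell=1$. *)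

theory Defs
  imports "HOL-Analysis.Analysis"
begin

definition proj_dist :: "real^'n \<Rightarrow> real^'n \<Rightarrow> real" where
  "proj_dist x y = (MAX i. ln (x$i / y$i)) - (MIN i. ln (x$i / y$i))"

primrec mpow :: "real^'n^'n \<Rightarrow> nat \<Rightarrow> real^'n^'n" where
  "mpow M 0 = mat 1"
| "mpow M (Suc l) = M ** mpow M l"

definition positive_matrix :: "real^'n^'n \<Rightarrow> bool" where
  "positive_matrix M \<longleftrightarrow> (\<forall>i j. M$i$j > 0)"

definition nonneg_matrix :: "real^'n^'n \<Rightarrow> bool" where
  "nonneg_matrix M \<longleftrightarrow> (\<forall>i j. M$i$j \<ge> 0)"

definition primitive :: "real^'n^'n \<Rightarrow> bool" where
  "primitive M \<longleftrightarrow> nonneg_matrix M \<and> (\<exists>l. positive_matrix (mpow M l))"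

definition prim_index :: "real^'n^'n \<Rightarrow> nat" where
  "prim_index M = (LEAST l. positive_matrix (mpow M l))"

definition birkhoff_theta :: "real^'n^'n \<Rightarrow> real" where
  "birkhoff_theta M = (let A = mpow M (prim_index M) in
     (MIN (i,j,k,l). (A$i$j * A$k$l) / (A$i$l * A$k$j)))"

definition birkhoff_tau :: "real^'n^'n \<Rightarrow> real" where
  "birkhoff_tau M = (1 - sqrt (birkhoff_theta M)) / (1 + sqrt (birkhoff_theta M))"

definition col_stochastic :: "real^'n^'n \<Rightarrow> bool" where
  "col_stochastic M \<longleftrightarrow> (\<forall>j. (\<Sum>i\<in>UNIV. M$i$j) = 1)"

definition is_eigenvalue :: "real^'n^'n \<Rightarrow> complex \<Rightarrow> bool" where
  "is_eigenvalue M c \<longleftrightarrow> (\<exists>z :: 'n \<Rightarrow> complex. (\<exists>j. z j \<noteq> 0) \<and>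
      (\<forall>i. (\<Sum>j\<in>UNIV. of_real (M$i$j) * z j) = c * z i))"

definition max_eigenvalue_is :: "real^'n^'n \<Rightarrow> real \<Rightarrow> bool" where
  "max_eigenvalue_is M r \<longleftrightarrow> is_eigenvalue M (of_real r) \<and>
      (\<forall>c. is_eigenvalue M c \<longrightarrow> cmod c \<le> r)"

end

theory Submission
  imports Defs
begin

text \<open>
  A nonnegative matrix with unit column sums does not increase the \<open>\<ell>\<^sub>1\<close>-norm, so all its
  eigenvalues have modulus at most 1, and 1 is an eigenvalue since the all-ones vector is a left
  fixed vector. For the eigenvectors, Birkhoff's theorem says that a positive matrix \<open>A\<close>
  contracts \<open>d\<^sub>p\<close> by the factor \<open>\<tau>\<^sub>A\<close>, while the entrywise ratio bound gives
  \<open>d\<^sub>p(Px, Qx) \<le> 2\<epsilon>\<close>. Hence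
  \<open>d\<^sub>p(u, v) = d\<^sub>p(Pu, Qv) \<le> d\<^sub>p(Pu, Pv) + d\<^sub>p(Pv, Qv) \<le> \<tau>\<^sub>P d\<^sub>p(u, v) + 2\<epsilon>\<close>,
  and symmetrically with \<open>\<tau>\<^sub>Q\<close>.

  Birkhoff's estimate for one pair of rows \<open>a, b\<close> reduces, after writing
  \<open>x = m (y + (s - 1) w)\<close> with \<open>0 \<le> w \<le> y\<close> and \<open>s = M / m\<close>, to bounding
  \<open>ln (1 + (s - 1) \<alpha>) - ln (1 + (s - 1) \<beta>)\<close> for weights \<open>\<alpha>, \<beta> \<in> [0, 1]\<close> constrained by the
  cross ratio \<open>\<theta>\<close>; that bound follows from the monotonicity in \<open>s\<close> of the difference with
  \<open>\<tau> ln s\<close>.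
\<close>

lemma birkhoff_scalar_ineq:
  fixes a b r s :: real
  assumes a: "0 \<le> a" "a \<le> 1" and b: "0 \<le> b" "b \<le> 1"
    and cross: "r\<^sup>2 * a * (1 - b) \<le> b * (1 - a)"
    and r: "0 < r" "r \<le> 1" and s: "1 \<le> s"
  shows "s * (a - b) * (1 + r) \<le> (1 - r) * (1 + (s - 1) * a) * (1 + (s - 1) * b)"
proof -
  define g where "g x = (1 - r) * (1 + (s - 1) * x) * (1 + (s - 1) * b) - s * (x - b) * (1 + r)" for x
  define c where "c = (1 - r) * (s - 1) * (1 + (s - 1) * b) - s * (1 + r)"
  have g_affine: "g x = g 0 + x * c" for x
    unfolding g_def c_def by (simp add: algebra_simps)
  have "g 0 \<ge> 0"
    using r s b unfolding g_def by (simp add: mult_nonneg_nonneg)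
  define E where "E = r\<^sup>2 * (1 - b) + b"
  have E: "E > 0"
    using r b unfolding E_def by (cases "b = 0") (simp_all add: add_nonneg_pos)
  \<comment> \<open>\<open>g\<close> is affine and nonnegative at \<open>0\<close> and at \<open>b / E\<close>, the largest \<open>a\<close> allowed by \<open>cross\<close>\<close>
  have "E * g (b / E) = (1 - r) * (r * (1 - b) - s * b)\<^sup>2"
  proof -
    have "E * g (b / E) = (1 - r) * (E + (s - 1) * b) * (1 + (s - 1) * b) - s * (b - b * E) * (1 + r)"
      unfolding g_def using E by (simp add: field_simps)
    also have "\<dots> = (1 - r) * (r * (1 - b) - s * b)\<^sup>2"
      unfolding E_def by (simp add: algebra_simps power2_eq_square)
    finally show ?thesis .
  qed
  then have "g (b / E) \<ge> 0"
    using E r by (metis zero_le_mult_iff zero_le_power2 diff_ge_0_iff_ge linorder_not_le)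
  have "a \<le> b / E"
    using cross E unfolding E_def by (simp add: field_simps)
  have "g a \<ge> 0"
  proof (cases "c \<ge> 0")
    case True
    then show ?thesis using g_affine[of a] \<open>g 0 \<ge> 0\<close> a by simp
  next
    case False
    then have "a * c \<ge> (b / E) * c" using \<open>a \<le> b / E\<close> by (intro mult_right_mono_neg) auto
    then show ?thesis using g_affine[of a] g_affine[of "b / E"] \<open>g (b / E) \<ge> 0\<close> by linarith
  qed
  then show ?thesis unfolding g_def by simp
qed

lemma ln_affine_diff_le:
  fixes a b r s :: real
  assumes a: "0 \<le> a" "a \<le> 1" and b: "0 \<le> b" "b \<le> 1"
    and cross: "r\<^sup>2 * a * (1 - b) \<le> b * (1 - a)"
    and r: "0 < r" "r \<le> 1" and s: "1 \<le> s"
  shows "ln (1 + (s - 1) * a) - ln (1 + (s - 1) * b) \<le> (1 - r) / (1 + r) * ln s"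
proof -
  define t where "t = (1 - r) / (1 + r)"
  define f where "f x = t * ln x - ln (1 + (x - 1) * a) + ln (1 + (x - 1) * b)" for x
  have "f 1 \<le> f s"
  proof (rule DERIV_nonneg_imp_nondecreasing[OF s])
    fix x assume x: "1 \<le> x" "x \<le> s"
    have A: "1 + (x - 1) * a > 0" and B: "1 + (x - 1) * b > 0"
      using a b x by (simp_all add: add_pos_nonneg)
    have deriv: "(f has_real_derivative t / x - a / (1 + (x - 1) * a) + b / (1 + (x - 1) * b)) (at x)"
      unfolding f_def by (rule derivative_eq_intros | use A B x in simp)+
    have "x * (a - b) \<le> t * (1 + (x - 1) * a) * (1 + (x - 1) * b)"
      using birkhoff_scalar_ineq[OF a b cross r x(1)] r unfolding t_def by (simp add: field_simps)
    then have "(a - b) / ((1 + (x - 1) * a) * (1 + (x - 1) * b)) \<le> t / x"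
      using A B x by (simp add: divide_le_eq le_divide_eq mult_ac)
    moreover have "a / (1 + (x - 1) * a) - b / (1 + (x - 1) * b)
        = (a - b) / ((1 + (x - 1) * a) * (1 + (x - 1) * b))"
      using A B by (simp add: field_simps)
    ultimately show "\<exists>y. (f has_real_derivative y) (at x) \<and> 0 \<le> y"
      using deriv by (intro exI conjI) auto
  qed
  then show ?thesis unfolding f_def t_def by simp
qed

lemma sum_cross_ratio_ineq:
  fixes a b w y :: "'a::finite \<Rightarrow> real" and \<theta> :: real
  assumes cross: "\<And>j l. \<theta> * (a j * b l) \<le> b j * a l"
    and w: "\<And>j. 0 \<le> w j" "\<And>j. w j \<le> y j"
  shows "\<theta> * ((\<Sum>j\<in>UNIV. a j * w j) * (\<Sum>l\<in>UNIV. b l * (y l - w l)))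
    \<le> (\<Sum>j\<in>UNIV. b j * w j) * (\<Sum>l\<in>UNIV. a l * (y l - w l))"
proof -
  have "\<theta> * ((\<Sum>j\<in>UNIV. a j * w j) * (\<Sum>l\<in>UNIV. b l * (y l - w l)))
      = (\<Sum>j\<in>UNIV. \<Sum>l\<in>UNIV. \<theta> * (a j * b l) * (w j * (y l - w l)))"
    by (subst sum_product) (simp add: sum_distrib_left mult_ac)
  also have "\<dots> \<le> (\<Sum>j\<in>UNIV. \<Sum>l\<in>UNIV. b j * a l * (w j * (y l - w l)))"
    using cross w by (intro sum_mono mult_right_mono) (auto simp: le_diff_eq)
  also have "\<dots> = (\<Sum>j\<in>UNIV. b j * w j) * (\<Sum>l\<in>UNIV. a l * (y l - w l))"
    by (simp add: sum_product mult_ac)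
  finally show ?thesis .
qed

lemma ln_weighted_sum_ratio_diff_le:
  fixes a b w y :: "'a::finite \<Rightarrow> real" and \<theta> s :: real
  assumes a: "\<And>j. 0 < a j" and b: "\<And>j. 0 < b j" and y: "\<And>j. 0 < y j"
    and w: "\<And>j. 0 \<le> w j" "\<And>j. w j \<le> y j"
    and cross: "\<And>j l. \<theta> * (a j * b l) \<le> b j * a l" and \<theta>: "0 < \<theta>" "\<theta> \<le> 1"
    and s: "1 \<le> s"
  shows "ln ((\<Sum>j\<in>UNIV. a j * (y j + (s - 1) * w j)) / (\<Sum>j\<in>UNIV. a j * y j))
       - ln ((\<Sum>j\<in>UNIV. b j * (y j + (s - 1) * w j)) / (\<Sum>j\<in>UNIV. b j * y j))
    \<le> (1 - sqrt \<theta>) / (1 + sqrt \<theta>) * ln s"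
proof -
  define Sa where "Sa = (\<Sum>j\<in>UNIV. a j * y j)"
  define Sb where "Sb = (\<Sum>j\<in>UNIV. b j * y j)"
  define \<alpha> where "\<alpha> = (\<Sum>j\<in>UNIV. a j * w j) / Sa"
  define \<beta> where "\<beta> = (\<Sum>j\<in>UNIV. b j * w j) / Sb"
  have "Sa > 0" "Sb > 0"
    unfolding Sa_def Sb_def using a b y by (auto intro!: sum_pos)
  have "(\<Sum>j\<in>UNIV. a j * w j) \<le> Sa" "(\<Sum>j\<in>UNIV. b j * w j) \<le> Sb"
    unfolding Sa_def Sb_def using a b w by (auto intro!: sum_mono mult_left_mono simp: less_imp_le)
  moreover have "(\<Sum>j\<in>UNIV. a j * w j) \<ge> 0" "(\<Sum>j\<in>UNIV. b j * w j) \<ge> 0"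
    using a b w by (auto intro!: sum_nonneg simp: less_imp_le)
  ultimately have \<alpha>: "0 \<le> \<alpha>" "\<alpha> \<le> 1" and \<beta>: "0 \<le> \<beta>" "\<beta> \<le> 1"
    unfolding \<alpha>_def \<beta>_def using \<open>Sa > 0\<close> \<open>Sb > 0\<close> by auto
  have split: "(\<Sum>j\<in>UNIV. c j * (y j - w j)) = (\<Sum>j\<in>UNIV. c j * y j) - (\<Sum>j\<in>UNIV. c j * w j)"
    "(\<Sum>j\<in>UNIV. c j * (y j + (s - 1) * w j)) = (\<Sum>j\<in>UNIV. c j * y j) + (s - 1) * (\<Sum>j\<in>UNIV. c j * w j)"
    for c :: "'a \<Rightarrow> real"
    by (simp_all add: algebra_simps sum_subtractf sum.distrib sum_distrib_left)
  have "(sqrt \<theta>)\<^sup>2 * \<alpha> * (1 - \<beta>) \<le> \<beta> * (1 - \<alpha>)"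
  proof -
    have "(sqrt \<theta>)\<^sup>2 * \<alpha> * (1 - \<beta>) = \<theta> * ((\<Sum>j\<in>UNIV. a j * w j) * (\<Sum>l\<in>UNIV. b l * (y l - w l))) / (Sa * Sb)"
      unfolding \<alpha>_def \<beta>_def split Sb_def[symmetric] using \<theta> \<open>Sa > 0\<close> \<open>Sb > 0\<close>
      by (simp add: field_simps)
    also have "\<dots> \<le> (\<Sum>j\<in>UNIV. b j * w j) * (\<Sum>l\<in>UNIV. a l * (y l - w l)) / (Sa * Sb)"
      using sum_cross_ratio_ineq[of \<theta> a b w y] cross w \<open>Sa > 0\<close> \<open>Sb > 0\<close> by (simp add: divide_right_mono)
    also have "\<dots> = \<beta> * (1 - \<alpha>)"
      unfolding \<alpha>_def \<beta>_def split Sa_def[symmetric] using \<open>Sa > 0\<close> \<open>Sb > 0\<close>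
      by (simp add: field_simps)
    finally show ?thesis .
  qed
  then have "ln (1 + (s - 1) * \<alpha>) - ln (1 + (s - 1) * \<beta>) \<le> (1 - sqrt \<theta>) / (1 + sqrt \<theta>) * ln s"
    using \<theta> s by (intro ln_affine_diff_le[OF \<alpha> \<beta>]) auto
  moreover have "(\<Sum>j\<in>UNIV. a j * (y j + (s - 1) * w j)) / Sa = 1 + (s - 1) * \<alpha>"
    "(\<Sum>j\<in>UNIV. b j * (y j + (s - 1) * w j)) / Sb = 1 + (s - 1) * \<beta>"
    unfolding \<alpha>_def \<beta>_def split Sa_def[symmetric] Sb_def[symmetric]
    using \<open>Sa > 0\<close> \<open>Sb > 0\<close> by (simp_all add: field_simps)
  ultimately show ?thesis unfolding Sa_def Sb_def by simp
qed

lemma ln_sum_ratio_diff_le: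
  fixes a b x y :: "'a::finite \<Rightarrow> real" and \<theta> m M :: real
  assumes a: "\<And>j. 0 < a j" and b: "\<And>j. 0 < b j" and y: "\<And>j. 0 < y j"
    and x: "\<And>j. m * y j \<le> x j" "\<And>j. x j \<le> M * y j" and m: "0 < m"
    and cross: "\<And>j l. \<theta> * (a j * b l) \<le> b j * a l" and \<theta>: "0 < \<theta>" "\<theta> \<le> 1"
  shows "ln ((\<Sum>j\<in>UNIV. a j * x j) / (\<Sum>j\<in>UNIV. a j * y j))
       - ln ((\<Sum>j\<in>UNIV. b j * x j) / (\<Sum>j\<in>UNIV. b j * y j))
    \<le> (1 - sqrt \<theta>) / (1 + sqrt \<theta>) * ln (M / m)"
proof -
  define s where "s = M / m"
  define w where "w j = (if M = m then 0 else (x j - m * y j) / (M - m))" for j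
  obtain j0 :: 'a where True by blast
  have "m \<le> M"
    using x[of j0] y[of j0] by (metis dual_order.trans mult_le_cancel_right not_less)
  then have "1 \<le> s" unfolding s_def using m by simp
  have x_eq: "x j = m * (y j + (s - 1) * w j)" for j
  proof (cases "M = m")
    case True
    then show ?thesis using x[of j] unfolding w_def by simp
  next
    case False
    then show ?thesis unfolding w_def s_def using m by (simp add: field_simps)
  qed
  have w: "0 \<le> w j" "w j \<le> y j" for j
    using x[of j] \<open>m \<le> M\<close> y[of j] by (auto simp: w_def field_simps)
  have ln_ratio: "ln ((\<Sum>j\<in>UNIV. c j * x j) / (\<Sum>j\<in>UNIV. c j * y j))
      = ln m + ln ((\<Sum>j\<in>UNIV. c j * (y j + (s - 1) * w j)) / (\<Sum>j\<in>UNIV. c j * y j))"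
    if c: "\<And>j. 0 < c j" for c :: "'a \<Rightarrow> real"
  proof -
    have "0 < (\<Sum>j\<in>UNIV. c j * (y j + (s - 1) * w j)) / (\<Sum>j\<in>UNIV. c j * y j)"
      using c y w \<open>1 \<le> s\<close> by (intro divide_pos_pos sum_pos mult_pos_pos add_pos_nonneg) auto
    moreover have "(\<Sum>j\<in>UNIV. c j * x j) = m * (\<Sum>j\<in>UNIV. c j * (y j + (s - 1) * w j))"
      unfolding x_eq by (simp add: sum_distrib_left mult_ac)
    ultimately show ?thesis
      using ln_mult_pos[OF m] by (simp only: times_divide_eq_right[symmetric])
  qed
  show ?thesis
    using ln_weighted_sum_ratio_diff_le[of a b y w \<theta> s] a b y w cross \<theta> \<open>1 \<le> s\<close>
    unfolding ln_ratio[OF a] ln_ratio[OF b] s_def by simp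
qed

lemma max_minus_min_add_le:
  fixes f g :: "'a::finite \<Rightarrow> real"
  shows "(MAX i. f i + g i) - (MIN i. f i + g i) \<le> ((MAX i. f i) - (MIN i. f i)) + ((MAX i. g i) - (MIN i. g i))"
proof -
  obtain i where i: "(MAX i. f i + g i) = f i + g i"
    using Max_in[of "range (\<lambda>i. f i + g i)"] by (auto simp del: Max_in)
  obtain k where k: "(MIN i. f i + g i) = f k + g k"
    using Min_in[of "range (\<lambda>i. f i + g i)"] by (auto simp del: Min_in)
  have "f i \<le> (MAX i. f i)" "g i \<le> (MAX i. g i)" "(MIN i. f i) \<le> f k" "(MIN i. g i) \<le> g k"
    by (auto intro: Max_ge Min_le)
  then show ?thesis using i k by linarith
qed

lemma proj_dist_triangle:
  fixes x y z :: "real^'n"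
  assumes "\<forall>i. x$i > 0" "\<forall>i. y$i > 0" "\<forall>i. z$i > 0"
  shows "proj_dist x z \<le> proj_dist x y + proj_dist y z"
proof -
  have "ln (x$i / z$i) = ln (x$i / y$i) + ln (y$i / z$i)" for i
  proof -
    have "x$i > 0" "y$i > 0" "z$i > 0" using assms by auto
    then show ?thesis by (simp add: ln_div)
  qed
  then show ?thesis
    unfolding proj_dist_def by (simp only: max_minus_min_add_le)
qed

lemma proj_dist_le_of_abs_ln_le:
  fixes x y :: "real^'n"
  assumes "\<And>i. \<bar>ln (x$i / y$i)\<bar> \<le> e"
  shows "proj_dist x y \<le> 2 * e"
proof -
  have "-e \<le> ln (x$i / y$i)" "ln (x$i / y$i) \<le> e" for i
    using assms[of i] by linarith+
  then have "(MAX i. ln (x$i / y$i)) \<le> e" "-e \<le> (MIN i. ln (x$i / y$i))"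
    by simp_all
  then show ?thesis unfolding proj_dist_def by linarith
qed

lemma proj_dist_matrix_vector_le:
  fixes A :: "real^'n^'n" and x y :: "real^'n" and \<theta> :: real
  assumes A: "positive_matrix A"
    and cross: "\<And>i j k l. \<theta> * (A$i$l * A$k$j) \<le> A$i$j * A$k$l" and \<theta>: "0 < \<theta>" "\<theta> \<le> 1"
    and x: "\<forall>i. x$i > 0" and y: "\<forall>i. y$i > 0"
  shows "proj_dist (A *v x) (A *v y) \<le> (1 - sqrt \<theta>) / (1 + sqrt \<theta>) * proj_dist x y"
proof -
  define L where "L j = ln (x$j / y$j)" for j
  define m where "m = exp (MIN j. L j)"
  define M where "M = exp (MAX j. L j)"
  have x_bounds: "m * y$j \<le> x$j" "x$j \<le> M * y$j" for j
  proof -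
    have "m \<le> exp (L j)" "exp (L j) \<le> M" unfolding m_def M_def by (auto intro: Min_le Max_ge)
    moreover have "exp (L j) = x$j / y$j" unfolding L_def using x y by simp
    ultimately show "m * y$j \<le> x$j" "x$j \<le> M * y$j"
      using y by (simp_all add: le_divide_eq divide_le_eq)
  qed
  have "ln (M / m) = proj_dist x y"
    unfolding M_def m_def proj_dist_def L_def by (simp add: ln_div)
  define G where "G i = ln ((A *v x)$i / (A *v y)$i)" for i
  obtain i where i: "(MAX i. G i) = G i"
    using Max_in[of "range G"] by (auto simp del: Max_in)
  obtain k where k: "(MIN i. G i) = G k"
    using Min_in[of "range G"] by (auto simp del: Min_in)
  have "G i - G k \<le> (1 - sqrt \<theta>) / (1 + sqrt \<theta>) * ln (M / m)"
    unfolding G_def matrix_vector_mult_def vec_lambda_beta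
  proof (rule ln_sum_ratio_diff_le[OF _ _ _ x_bounds])
    show "0 < A$i$j" "0 < A$k$j" for j
      using A unfolding positive_matrix_def by auto
    show "\<theta> * (A$i$j * A$k$l) \<le> A$k$j * A$i$l" for j l
      using cross[of k l i j] by (simp add: mult_ac)
  qed (use y \<theta> in \<open>simp_all add: m_def\<close>)
  then show ?thesis
    using i k \<open>ln (M / m) = proj_dist x y\<close> unfolding proj_dist_def G_def by simp
qed

lemma proj_dist_card_1:
  fixes x y :: "real^'n"
  assumes "CARD('n) = 1"
  shows "proj_dist x y = 0"
proof -
  obtain i :: 'n where "UNIV = {i}" using assms by (rule card_1_singletonE)
  then have "range f = {f i}" for f :: "'n \<Rightarrow> real" by (metis image_empty image_insert)
  then show ?thesis unfolding proj_dist_def by simp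
qed

lemma positive_mpow_prim_index:
  assumes "positive_matrix (mpow A l)"
  shows "positive_matrix (mpow A (prim_index A))"
  unfolding prim_index_def using assms by (rule LeastI)

lemma prim_index_positive_matrix:
  fixes A :: "real^'n^'n"
  assumes A: "positive_matrix A" and n: "2 \<le> CARD('n)"
  shows "prim_index A = 1"
  unfolding prim_index_def
proof (rule Least_equality)
  show "positive_matrix (mpow A 1)" using A by simp
next
  fix l assume pos: "positive_matrix (mpow A l)"
  obtain i j :: 'n where "i \<noteq> j"
    using n card_le_Suc0_iff_eq[of "UNIV :: 'n set"] by auto
  then have "mpow A 0 $ i $ j = 0" by (simp add: mat_def)
  moreover have "0 < mpow A l $ i $ j" using pos unfolding positive_matrix_def by simp
  ultimately show "1 \<le> l" by (cases l) auto
qed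

lemma birkhoff_theta_bounds:
  fixes A :: "real^'n^'n"
  assumes pos: "positive_matrix (mpow A (prim_index A))"
  defines "B \<equiv> mpow A (prim_index A)"
  shows "0 < birkhoff_theta A" "birkhoff_theta A \<le> 1"
    and "birkhoff_theta A * (B$i$l * B$k$j) \<le> B$i$j * B$k$l"
proof -
  define f where "f = (\<lambda>(i, j, k, l). (B$i$j * B$k$l) / (B$i$l * B$k$j))"
  have B: "0 < B$i$j" for i j using pos unfolding B_def positive_matrix_def by simp
  have theta: "birkhoff_theta A = Min (range f)"
    unfolding birkhoff_theta_def B_def[symmetric] f_def by simp
  obtain q where "birkhoff_theta A = f q"
    using Min_in[of "range f"] theta by (auto simp del: Min_in)
  then show "0 < birkhoff_theta A"
    using B unfolding f_def by (auto split: prod.splits)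
  have "Min (range f) \<le> f (i, i, i, i)" by simp
  then show "birkhoff_theta A \<le> 1"
    using B[of i i] unfolding theta f_def by simp
  have "Min (range f) \<le> f (i, j, k, l)" by simp
  then have "birkhoff_theta A \<le> (B$i$j * B$k$l) / (B$i$l * B$k$j)"
    unfolding theta f_def by simp
  then show "birkhoff_theta A * (B$i$l * B$k$j) \<le> B$i$j * B$k$l"
    using B by (simp add: le_divide_eq)
qed

lemma birkhoff_tau_less_1:
  assumes "positive_matrix (mpow A l)"
  shows "birkhoff_tau A < 1"
proof -
  have "0 < sqrt (birkhoff_theta A)"
    using birkhoff_theta_bounds(1)[OF positive_mpow_prim_index[OF assms]] by simp
  then have "1 - sqrt (birkhoff_theta A) < 1 + sqrt (birkhoff_theta A)" "0 < 1 + sqrt (birkhoff_theta A)"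
    by linarith+
  then show ?thesis unfolding birkhoff_tau_def by (simp only: divide_less_eq_1_pos)
qed

lemma birkhoff_contraction:
  fixes A :: "real^'n^'n" and x y :: "real^'n"
  assumes A: "positive_matrix A" and x: "\<forall>i. x$i > 0" and y: "\<forall>i. y$i > 0"
  shows "proj_dist (A *v x) (A *v y) \<le> birkhoff_tau A * proj_dist x y"
proof (cases "CARD('n) = 1")
  case True
  then show ?thesis by (simp add: proj_dist_card_1)
next
  case False
  moreover have "0 < CARD('n)" by simp
  ultimately have "prim_index A = 1"
    using A by (intro prim_index_positive_matrix) linarith+
  then have "positive_matrix (mpow A (prim_index A))" and B: "mpow A (prim_index A) = A"
    using A by simp_all
  note \<theta> = birkhoff_theta_bounds[OF this(1), unfolded B]
  show ?thesis
    unfolding birkhoff_tau_def by (rule proj_dist_matrix_vector_le[OF A \<theta>(3) \<theta>(1,2) x y])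
qed

lemma abs_ln_div_le:
  fixes a b e :: real
  assumes "0 < a" "0 < b" "a \<le> exp e * b" "b \<le> exp e * a"
  shows "\<bar>ln (a / b)\<bar> \<le> e"
proof -
  have "ln a \<le> e + ln b" "ln b \<le> e + ln a"
    using assms ln_le_cancel_iff[of a "exp e * b"] ln_le_cancel_iff[of b "exp e * a"]
    by (simp_all add: ln_mult_pos)
  then show ?thesis using assms by (simp add: ln_div)
qed

lemma matrix_vector_mult_pos:
  fixes A :: "real^'n^'n" and x :: "real^'n"
  assumes "positive_matrix A" "\<forall>i. x$i > 0"
  shows "\<forall>i. (A *v x)$i > 0"
  using assms by (auto simp: positive_matrix_def matrix_vector_mult_def intro!: sum_pos)

lemma proj_dist_matrix_perturbation:
  fixes A B :: "real^'n^'n" and x :: "real^'n" and \<epsilon> :: real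
  assumes A: "positive_matrix A" and B: "positive_matrix B" and x: "\<forall>i. x$i > 0"
    and ratio: "\<forall>i j. exp (-\<epsilon>) \<le> A$i$j / B$i$j \<and> A$i$j / B$i$j \<le> exp \<epsilon>"
  shows "proj_dist (A *v x) (B *v x) \<le> 2 * \<epsilon>"
proof (rule proj_dist_le_of_abs_ln_le)
  fix i
  have AB: "A$i$j \<le> exp \<epsilon> * B$i$j" and BA: "B$i$j \<le> exp \<epsilon> * A$i$j" for j
    using ratio A B unfolding positive_matrix_def
    by (auto simp: divide_le_eq le_divide_eq exp_minus field_simps)
  have "(A *v x)$i \<le> exp \<epsilon> * (B *v x)$i" "(B *v x)$i \<le> exp \<epsilon> * (A *v x)$i"
    unfolding matrix_vector_mult_def vec_lambda_beta sum_distrib_left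
    using AB BA x by (auto intro!: sum_mono simp: mult.assoc[symmetric] less_imp_le)
  then show "\<bar>ln ((A *v x)$i / (B *v x)$i)\<bar> \<le> \<epsilon>"
    using matrix_vector_mult_pos[OF A x] matrix_vector_mult_pos[OF B x] by (intro abs_ln_div_le) auto
qed

lemma col_stochastic_fixed_vector:
  fixes A :: "real^'n^'n"
  assumes "col_stochastic A"
  shows "\<exists>y. y \<noteq> 0 \<and> A *v y = y"
proof -
  \<comment> \<open>the all-ones vector lies in the kernel of \<open>transpose (A - mat 1)\<close>, so \<open>A - mat 1\<close> is singular\<close>
  have "(\<Sum>j\<in>UNIV. (A - mat 1)$j$i) = 0" for i
    using assms unfolding col_stochastic_def by (simp add: sum_subtractf mat_def)
  then have "transpose (A - mat 1) *v (\<chi> i. 1) = 0"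
    by (simp add: vec_eq_iff matrix_vector_mult_def transpose_def del: vector_minus_component)
  moreover have "((\<chi> i. 1) :: real^'n) \<noteq> 0" by (simp add: vec_eq_iff)
  ultimately obtain y where "y \<noteq> 0" "(A - mat 1) *v y = 0"
    by (metis matrix_nonfull_linear_equations_eq rank_transpose)
  then show ?thesis by (auto simp: matrix_vector_mult_diff_rdistrib)
qed

lemma col_stochastic_eigenvalue_norm_le_1:
  fixes A :: "real^'n^'n"
  assumes A: "nonneg_matrix A" "col_stochastic A" and "is_eigenvalue A c"
  shows "cmod c \<le> 1"
proof -
  obtain z :: "'n \<Rightarrow> complex" and j where "z j \<noteq> 0"
    and z: "\<And>i. (\<Sum>j\<in>UNIV. of_real (A$i$j) * z j) = c * z i"
    using assms(3) unfolding is_eigenvalue_def by blast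
  \<comment> \<open>column sums 1 make \<open>A\<close> a contraction for the \<open>\<ell>\<^sub>1\<close>-norm\<close>
  have "cmod c * (\<Sum>i\<in>UNIV. cmod (z i)) = (\<Sum>i\<in>UNIV. cmod (\<Sum>j\<in>UNIV. of_real (A$i$j) * z j))"
    by (simp add: z sum_distrib_left norm_mult)
  also have "\<dots> \<le> (\<Sum>i\<in>UNIV. \<Sum>j\<in>UNIV. A$i$j * cmod (z j))"
    using A(1) unfolding nonneg_matrix_def
    by (intro sum_mono order.trans[OF norm_sum]) (simp add: norm_mult)
  also have "\<dots> = (\<Sum>j\<in>UNIV. (\<Sum>i\<in>UNIV. A$i$j) * cmod (z j))"
    by (subst sum.swap) (simp add: sum_distrib_right)
  also have "\<dots> = (\<Sum>i\<in>UNIV. cmod (z i))"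
    using A(2) unfolding col_stochastic_def by simp
  finally have "cmod c * (\<Sum>i\<in>UNIV. cmod (z i)) \<le> 1 * (\<Sum>i\<in>UNIV. cmod (z i))" by simp
  moreover have "0 < (\<Sum>i\<in>UNIV. cmod (z i))"
    using \<open>z j \<noteq> 0\<close> by (intro sum_pos2[where i=j]) auto
  ultimately show ?thesis by (simp add: mult_le_cancel_right)
qed

lemma max_eigenvalue_col_stochastic:
  fixes A :: "real^'n^'n"
  assumes "nonneg_matrix A" "col_stochastic A"
  shows "max_eigenvalue_is A 1"
proof -
  obtain y where y: "y \<noteq> 0" "A *v y = y"
    using col_stochastic_fixed_vector[OF assms(2)] by blast
  have "is_eigenvalue A 1"
    unfolding is_eigenvalue_def
  proof (intro exI[of _ "\<lambda>j. complex_of_real (y$j)"] conjI allI)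
    show "\<exists>j. complex_of_real (y$j) \<noteq> 0" using y(1) by (simp add: vec_eq_iff)
    show "(\<Sum>j\<in>UNIV. of_real (A$i$j) * complex_of_real (y$j)) = 1 * complex_of_real (y$i)" for i
      using arg_cong[OF y(2), of "\<lambda>v. complex_of_real (v$i)"]
      by (simp add: matrix_vector_mult_def)
  qed
  then show ?thesis
    unfolding max_eigenvalue_is_def using col_stochastic_eigenvalue_norm_le_1[OF assms] by simp
qed

theorem propositionA1:
  fixes P Q :: "real^'n^'n" and \<epsilon> :: real
  assumes P01: "\<forall>i j. 0 < P$i$j \<and> P$i$j < 1"
    and Q01: "\<forall>i j. 0 < Q$i$j \<and> Q$i$j < 1"
    and Pst: "col_stochastic P" and Qst: "col_stochastic Q"
    and eps: "\<epsilon> > 0"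
    and ratio: "\<forall>i j. exp (-\<epsilon>) \<le> P$i$j / Q$i$j \<and> P$i$j / Q$i$j \<le> exp \<epsilon>"
  shows "max_eigenvalue_is P 1 \<and> max_eigenvalue_is Q 1 \<and>
    (\<forall>u v :: real^'n. (\<forall>i. u$i > 0) \<longrightarrow> (\<forall>i. v$i > 0) \<longrightarrow> P *v u = u \<longrightarrow> Q *v v = v \<longrightarrow>
       proj_dist u v \<le> 2 * \<epsilon> / (1 - min (birkhoff_tau P) (birkhoff_tau Q)))"
proof (intro conjI allI impI)
  have P: "positive_matrix P" and Q: "positive_matrix Q"
    using P01 Q01 unfolding positive_matrix_def by auto
  then show "max_eigenvalue_is P 1" "max_eigenvalue_is Q 1"
    using Pst Qst
    by (auto intro!: max_eigenvalue_col_stochastic simp: positive_matrix_def nonneg_matrix_def less_imp_le)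
  fix u v :: "real^'n"
  assume u: "\<forall>i. u$i > 0" and v: "\<forall>i. v$i > 0" and "P *v u = u" and "Q *v v = v"
  then have d: "proj_dist u v = proj_dist (P *v u) (Q *v v)" by simp
  note pos = matrix_vector_mult_pos[OF P u] matrix_vector_mult_pos[OF P v]
    matrix_vector_mult_pos[OF Q u] matrix_vector_mult_pos[OF Q v]
  have "proj_dist u v \<le> birkhoff_tau P * proj_dist u v + 2 * \<epsilon>"
    using d proj_dist_triangle[OF pos(1,2,4)] birkhoff_contraction[OF P u v]
      proj_dist_matrix_perturbation[OF P Q v ratio] by linarith
  moreover have "proj_dist u v \<le> birkhoff_tau Q * proj_dist u v + 2 * \<epsilon>"
    using d proj_dist_triangle[OF pos(1,3,4)] birkhoff_contraction[OF Q u v]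
      proj_dist_matrix_perturbation[OF P Q u ratio] by linarith
  ultimately have "proj_dist u v * (1 - min (birkhoff_tau P) (birkhoff_tau Q)) \<le> 2 * \<epsilon>"
    by (simp add: min_def algebra_simps)
  moreover have "min (birkhoff_tau P) (birkhoff_tau Q) < 1"
    using birkhoff_tau_less_1[of P 1] P by simp
  ultimately show "proj_dist u v \<le> 2 * \<epsilon> / (1 - min (birkhoff_tau P) (birkhoff_tau Q))"
    by (simp add: le_divide_eq)
qed

end
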